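(* In the design described in the context, suppose the boundaries $l_{k,j}\le u_{k,j}$ ($l_{k,J_k}=u_{k,J_k}$) are chosen so that, under the global null hypothesis $H_G:\mu_0=\mu_1=\dots=\mu_K$, $$P\Big(\bigcap_{k=1}^K\bigcup_{j=1}^{J_k}\Big[\bigcap_{i=1}^{j-1}\{l_{k,i}\le Z_{k,i}\le u_{k,i}\}\cap\{Z_{k,j}<l_{k,j}\}\Big]\Big)=1-\alpha$$ (i.e. with probability $1-\alpha$ every arm's statistic path falls below its lower boundary before ever exceeding its upper boundary; empty intersections are the whole sample space). Then the family-wise error rate is controlled in the strong sense at level $\alpha$: for every configuration of means $(\mu_0,\dots,\mu_K)$, the probability of rejecting at least one true $H_{0k}$ is at most $\alpha$.
   Context: A trial compares $K$ experimental arms with one common control arm (arm $0$). Outcomes on arm $k\in\{0,\dots,K\}$ are independent $N(\mu_k,\sigma^2)$ with $\sigma^2$ known. The control is recruited over stages $1,\dots,J_0$, with an analysis at the end of each stage; $n_{0,j}$ denotes the cumulative number of control patients by the end of stage $j$ ($n_{0,0}=0$). Experimental arm $k$ is added at the end of control stage $s(k)\ge 0$ and has analyses $j=1,\dots,J_k$ (with $s(k)+J_k\le J_0$), its $j$-th analysis coinciding with the end of control stage $s(k)+j$; $n_{k,j}$ denotes the cumulative number of patients on arm $k$ by its $j$-th analysis. Only concurrent controls are used: the test statistic for arm $k$ at its $j$-th analysis is $$Z_{k,j}=\frac{n_{k,j}^{-1}\sum_{i=1}^{n_{k,j}}X_{k,i}-(n_{0,s(k)+j}-n_{0,s(k)})^{-1}\sum_{i=n_{0,s(k)}+1}^{n_{0,s(k)+j}}X_{0,i}}{\sigma\sqrt{n_{k,j}^{-1}+(n_{0,s(k)+j}-n_{0,s(k)})^{-1}}},$$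 where $X_{k,i}$ is the outcome of the $i$-th patient on arm $k$. The null hypotheses are $H_{0k}:\mu_k\le\mu_0$, $k=1,\dots,K$. At the $j$-th analysis of an arm $k$ still in the trial, if $Z_{k,j}>u_{k,j}$ then $H_{0k}$ is rejected and the whole trial stops; if $Z_{k,j}<l_{k,j}$ arm $k$ is dropped from all subsequent stages; otherwise arm $k$ (and the control) continue to the next stage. The trial also stops if all arms have been dropped. Strong control of the FWER at level $\alpha$ means that for every configuration of the means the probability of rejecting at least one true $H_{0k}$ is at most $\alpha$. *)

theory Defs
  imports "HOL-Probability.Probability"
begin

text \<open>Patient outcomes are indexed by pairs (k, i): arm k (0 = control), i-th patient (i >= 1).
  A sample point is a function x :: nat \<times> nat \<Rightarrow> real.\<close>

definition patients :: "nat \<Rightarrow> (nat \<Rightarrow> nat) \<Rightarrow> (nat \<Rightarrow> nat \<Rightarrow> nat) \<Rightarrow> (nat \<times> nat) set" where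
  "patients K J n = {(k, i). k \<le> K \<and> 1 \<le> i \<and> i \<le> n k (J k)}"

definition normal_measure :: "real \<Rightarrow> real \<Rightarrow> real measure" where
  "normal_measure m \<sigma> = density lborel (normal_density m \<sigma>)"

definition trial_space ::
  "nat \<Rightarrow> (nat \<Rightarrow> nat) \<Rightarrow> (nat \<Rightarrow> nat \<Rightarrow> nat) \<Rightarrow> real \<Rightarrow> (nat \<Rightarrow> real) \<Rightarrow> (nat \<times> nat \<Rightarrow> real) measure" where
  "trial_space K J n \<sigma> \<mu> = PiM (patients K J n) (\<lambda>ki. normal_measure (\<mu> (fst ki)) \<sigma>)"

text \<open>Test statistic Z_{k,j} with concurrent controls only.\<close>
definition Zstat ::
  "real \<Rightarrow> (nat \<Rightarrow> nat) \<Rightarrow> (nat \<Rightarrow> nat \<Rightarrow> nat) \<Rightarrow> nat \<Rightarrow> nat \<Rightarrow> (nat \<times> nat \<Rightarrow> real) \<Rightarrow> real" where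
  "Zstat \<sigma> s n k j x =
     ((\<Sum>i\<in>{1..n k j}. x (k, i)) / real (n k j)
      - (\<Sum>i\<in>{n 0 (s k) + 1..n 0 (s k + j)}. x (0, i)) / (real (n 0 (s k + j)) - real (n 0 (s k))))
     / (\<sigma> * sqrt (1 / real (n k j) + 1 / (real (n 0 (s k + j)) - real (n 0 (s k)))))"

definition crosses_upper where
  "crosses_upper \<sigma> s n l u k j x \<longleftrightarrow>
     (\<forall>i\<in>{1..<j}. l k i \<le> Zstat \<sigma> s n k i x \<and> Zstat \<sigma> s n k i x \<le> u k i)
     \<and> Zstat \<sigma> s n k j x > u k j"

definition drops_at where
  "drops_at \<sigma> s n l u k j x \<longleftrightarrow>
     (\<forall>i\<in>{1..<j}. l k i \<le> Zstat \<sigma> s n k i x \<and> Zstat \<sigma> s n k i x \<le> u k i)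
     \<and> Zstat \<sigma> s n k j x < l k j"

text \<open>The trial stops at the
  first control stage at which some arm crosses its upper boundary.\<close>
definition rejects where
  "rejects K J s \<sigma> n l u k x \<longleftrightarrow>
     (\<exists>j\<in>{1..J k}. crosses_upper \<sigma> s n l u k j x \<and>
        (\<forall>k'\<in>{1..K}. \<forall>j'\<in>{1..J k'}. s k' + j' < s k + j \<longrightarrow> \<not> crosses_upper \<sigma> s n l u k' j' x))"

end

theory Submission imports Defs begin

text \<open>Let A be the set of arms with \<open>\<mu> k \<le> \<mu> 0\<close>. Rejecting some \<open>H\<^sub>0\<^sub>k\<close> with \<open>k \<in> A\<close> means that
  arm k crosses its upper boundary before its lower one, so the rejection lies outside the event
  \<open>D\<^sub>A\<close> that every arm of A drops first. Shifting each outcome of arm k by \<open>\<mu> k - \<mu> 0\<close> turns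
  the trial under the global null into the trial under \<open>\<mu>\<close>; for \<open>k \<in> A\<close> the shift can only
  lower every \<open>Z\<^sub>k\<^sub>,\<^sub>j\<close>, so it maps \<open>D\<^sub>A\<close> into itself. Hence the probability of \<open>D\<^sub>A\<close>
  under \<open>\<mu>\<close> is at least its probability under the global null, which in turn is at least the
  probability \<open>1 - \<alpha>\<close> that all K arms drop first.\<close>

lemma bounded_lift_Suc_mono_le:
  fixes f :: "nat \<Rightarrow> 'a::order"
  assumes "\<And>i. a \<le> i \<Longrightarrow> i < b \<Longrightarrow> f i \<le> f (Suc i)" and "a \<le> b"
  shows "f a \<le> f b"
  using \<open>a \<le> b\<close> by (induction rule: dec_induct) (auto intro: order.trans assms(1))

lemma measure_le_distr_of_subset_preimage:
  assumes "finite_measure M" and T: "T \<in> M \<rightarrow>\<^sub>M N" and A: "A \<in> sets N"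
    and sub: "A \<subseteq> T -` A \<inter> space M"
  shows "measure M A \<le> measure (distr M N T) A"
proof -
  interpret finite_measure M by fact
  have "measure M A \<le> measure M (T -` A \<inter> space M)"
    using sub measurable_sets[OF T A] by (rule finite_measure_mono)
  also have "\<dots> = measure (distr M N T) A"
    using T A by (simp add: measure_distr)
  finally show ?thesis .
qed

lemma distr_PiM_componentwise:
  assumes fin: "finite I" and "product_prob_space M" and "product_prob_space N"
    and f: "\<And>i. i \<in> I \<Longrightarrow> f i \<in> M i \<rightarrow>\<^sub>M N i"
    and distr_f: "\<And>i. i \<in> I \<Longrightarrow> distr (M i) (N i) (f i) = N i"
  shows "distr (PiM I M) (PiM I N) (\<lambda>x. \<lambda>i\<in>I. f i (x i)) = PiM I N"
    (is "distr _ _ ?F = _")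
proof -
  interpret M: product_prob_space M by fact
  interpret N: product_prob_space N by fact
  have F: "?F \<in> PiM I M \<rightarrow>\<^sub>M PiM I N"
    using f by (intro measurable_restrict) (auto intro: measurable_compose[OF measurable_component_singleton])
  show ?thesis
  proof (rule N.PiM_eqI[OF fin])
    fix A assume A: "\<And>i. i \<in> I \<Longrightarrow> A i \<in> sets (N i)"
    have "emeasure (distr (PiM I M) (PiM I N) ?F) (Pi\<^sub>E I A)
        = emeasure (PiM I M) (?F -` Pi\<^sub>E I A \<inter> space (PiM I M))"
      using A by (intro emeasure_distr[OF F] sets_PiM_I_finite fin)
    also have "?F -` Pi\<^sub>E I A \<inter> space (PiM I M) = Pi\<^sub>E I (\<lambda>i. f i -` A i \<inter> space (M i))"
      using f by (auto simp: space_PiM PiE_iff extensional_def dest: measurable_space)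
    also have "emeasure (PiM I M) \<dots> = (\<Prod>i\<in>I. emeasure (M i) (f i -` A i \<inter> space (M i)))"
      using A f by (intro M.emeasure_PiM fin) auto
    also have "\<dots> = (\<Prod>i\<in>I. emeasure (N i) (A i))"
      using A f distr_f by (intro prod.cong refl) (metis emeasure_distr)
    finally show "emeasure (distr (PiM I M) (PiM I N) ?F) (Pi\<^sub>E I A) = (\<Prod>i\<in>I. emeasure (N i) (A i))" .
  qed simp
qed

lemma prob_space_normal_measure: "\<sigma> > 0 \<Longrightarrow> prob_space (normal_measure m \<sigma>)"
  by (simp add: normal_measure_def prob_space_normal_density)

lemma sets_normal_measure [simp, measurable_cong]: "sets (normal_measure m \<sigma>) = sets borel"
  by (simp add: normal_measure_def)

lemma space_normal_measure [simp]: "space (normal_measure m \<sigma>) = UNIV"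
  by (simp add: normal_measure_def)

lemma measurable_normal_measure_target [simp]: "M \<rightarrow>\<^sub>M normal_measure m \<sigma> = borel_measurable M"
  by (rule measurable_cong_sets) simp_all

lemma distr_normal_measure_add:
  assumes "\<sigma> > 0"
  shows "distr (normal_measure m \<sigma>) lborel ((+) d) = normal_measure (d + m) \<sigma>"
proof -
  interpret prob_space "normal_measure m \<sigma>" by (rule prob_space_normal_measure[OF assms])
  have "distributed (normal_measure m \<sigma>) lborel (\<lambda>x. x) (normal_density m \<sigma>)"
    by (auto simp: distributed_def normal_measure_def distr_id2)
  from normal_density_affine[OF this assms, of 1 d] assms show ?thesis
    by (simp add: distributed_def normal_measure_def)
qed

lemma distr_PiM_normal_shift:
  assumes "finite I" and "\<sigma> > 0"
  shows "distr (PiM I (\<lambda>_. normal_measure c \<sigma>)) (PiM I (\<lambda>i. normal_measure (m i) \<sigma>))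
           (\<lambda>y. \<lambda>i\<in>I. (m i - c) + y i) = PiM I (\<lambda>i. normal_measure (m i) \<sigma>)"
proof (rule distr_PiM_componentwise[OF \<open>finite I\<close>])
  fix i
  have "distr (normal_measure c \<sigma>) (normal_measure (m i) \<sigma>) ((+) (m i - c))
      = distr (normal_measure c \<sigma>) lborel ((+) (m i - c))"
    by (rule distr_cong) simp_all
  then show "distr (normal_measure c \<sigma>) (normal_measure (m i) \<sigma>) ((+) (m i - c)) = normal_measure (m i) \<sigma>"
    using distr_normal_measure_add[OF \<open>\<sigma> > 0\<close>] by simp
qed (auto intro!: product_prob_spaceI prob_space_normal_measure \<open>\<sigma> > 0\<close>)

lemma finite_patients: "finite (patients K J n)"
proof -
  have "patients K J n = Sigma {..K} (\<lambda>k. {1..n k (J k)})"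
    by (auto simp: patients_def)
  then show ?thesis by simp
qed

lemma prob_space_trial_space: "\<sigma> > 0 \<Longrightarrow> prob_space (trial_space K J n \<sigma> \<mu>)"
  unfolding trial_space_def by (intro prob_space_PiM prob_space_normal_measure)

lemma space_trial_space: "space (trial_space K J n \<sigma> \<mu>) = space (trial_space K J n \<sigma> \<mu>')"
  by (simp add: trial_space_def space_PiM)

lemma measurable_outcome: "(\<lambda>x. x ki) \<in> borel_measurable (trial_space K J n \<sigma> \<mu>)"
proof (cases "ki \<in> patients K J n")
  case True
  then show ?thesis
    unfolding trial_space_def using measurable_component_singleton
    by (metis measurable_normal_measure_target)
next
  case False
  then have "x ki = undefined" if "x \<in> space (trial_space K J n \<sigma> \<mu>)" for x
    using that by (cases ki) (auto simp: trial_space_def space_PiM PiE_def extensional_def)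
  then show ?thesis
    by (subst measurable_cong[where g="\<lambda>_. undefined"]) simp_all
qed

lemma borel_measurable_Zstat [measurable]:
  "Zstat \<sigma>' s n' k j \<in> borel_measurable (trial_space K J n \<sigma> \<mu>)"
  unfolding Zstat_def by (intro borel_measurable_divide borel_measurable_diff
      borel_measurable_sum measurable_outcome borel_measurable_const)

definition mean_shift :: "nat \<Rightarrow> (nat \<Rightarrow> nat) \<Rightarrow> (nat \<Rightarrow> nat \<Rightarrow> nat) \<Rightarrow> (nat \<Rightarrow> real) \<Rightarrow> real
    \<Rightarrow> (nat \<times> nat \<Rightarrow> real) \<Rightarrow> (nat \<times> nat \<Rightarrow> real)" where
  "mean_shift K J n \<mu> c y = (\<lambda>ki\<in>patients K J n. (\<mu> (fst ki) - c) + y ki)"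

lemma mean_shift_measurable:
  "mean_shift K J n \<mu> c \<in> trial_space K J n \<sigma> (\<lambda>_. c) \<rightarrow>\<^sub>M trial_space K J n \<sigma> \<mu>"
  unfolding mean_shift_def trial_space_def
  by (intro measurable_restrict) (simp add: measurable_compose[OF measurable_component_singleton])

lemma distr_trial_space_mean_shift:
  "\<sigma> > 0 \<Longrightarrow> distr (trial_space K J n \<sigma> (\<lambda>_. c)) (trial_space K J n \<sigma> \<mu>) (mean_shift K J n \<mu> c)
      = trial_space K J n \<sigma> \<mu>"
  unfolding trial_space_def mean_shift_def
  by (rule distr_PiM_normal_shift[OF finite_patients])

text \<open>The hypothesis \<open>n 0 (s k) \<le> n 0 (s k + j)\<close> keeps the denominator of \<open>Z\<^sub>k\<^sub>,\<^sub>j\<close> nonnegative: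
  HOL's \<open>sqrt\<close> is odd, i.e. negative on negative arguments.\<close>
lemma Zstat_mean_shift_le:
  assumes "k \<le> K" and "0 < n k j" and "n k j \<le> n k (J k)"
    and "n 0 (s k) \<le> n 0 (s k + j)" and "n 0 (s k + j) \<le> n 0 (J 0)"
    and "0 \<le> \<sigma>" and "\<mu> k \<le> \<mu> 0"
  shows "Zstat \<sigma> s n k j (mean_shift K J n \<mu> (\<mu> 0) y) \<le> Zstat \<sigma> s n k j y"
proof -
  let ?y' = "mean_shift K J n \<mu> (\<mu> 0) y"
  define S where "S = (\<Sum>i\<in>{1..n k j}. y (k, i))"
  define C where "C = (\<Sum>i\<in>{n 0 (s k) + 1..n 0 (s k + j)}. y (0, i)) / (real (n 0 (s k + j)) - real (n 0 (s k)))"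
  define D where "D = \<sigma> * sqrt (1 / real (n k j) + 1 / (real (n 0 (s k + j)) - real (n 0 (s k))))"
  have arm: "(\<Sum>i\<in>{1..n k j}. ?y' (k, i)) = S + real (n k j) * (\<mu> k - \<mu> 0)"
    using assms(1,3) by (simp add: S_def mean_shift_def patients_def sum.distrib)
  have control: "(\<Sum>i\<in>{n 0 (s k) + 1..n 0 (s k + j)}. ?y' (0, i)) = (\<Sum>i\<in>{n 0 (s k) + 1..n 0 (s k + j)}. y (0, i))"
    using assms(5) by (intro sum.cong) (auto simp: mean_shift_def patients_def)
  have "0 \<le> D"
    using assms(4,6) by (simp add: D_def)
  have "Zstat \<sigma> s n k j ?y' = (S / real (n k j) + (\<mu> k - \<mu> 0) - C) / D"
    using \<open>0 < n k j\<close> unfolding Zstat_def arm control C_def D_def by (simp add: add_divide_distrib)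
  also have "\<dots> \<le> (S / real (n k j) - C) / D"
    using \<open>0 \<le> D\<close> \<open>\<mu> k \<le> \<mu> 0\<close> by (intro divide_right_mono) auto
  also have "\<dots> = Zstat \<sigma> s n k j y"
    unfolding Zstat_def S_def C_def D_def ..
  finally show ?thesis .
qed

lemma drops_at_if_Zstat_le:
  assumes le: "\<forall>i\<in>{1..j}. Zstat \<sigma> s n k i x' \<le> Zstat \<sigma> s n k i x"
    and drop: "drops_at \<sigma> s n l u k j x" and "1 \<le> j"
  shows "\<exists>j'\<in>{1..j}. drops_at \<sigma> s n l u k j' x'"
proof -
  let ?below = "\<lambda>i. 1 \<le> i \<and> Zstat \<sigma> s n k i x' < l k i"
  define j' where "j' = (LEAST i. ?below i)"
  have "Zstat \<sigma> s n k j x' \<le> Zstat \<sigma> s n k j x"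
    using le \<open>1 \<le> j\<close> by simp
  with drop \<open>1 \<le> j\<close> have "?below j"
    unfolding drops_at_def by simp
  then have "?below j'" and "j' \<le> j"
    unfolding j'_def by (rule LeastI, rule Least_le)
  have "drops_at \<sigma> s n l u k j' x'"
    unfolding drops_at_def
  proof (intro conjI ballI)
    fix i assume i: "i \<in> {1..<j'}"
    then show "l k i \<le> Zstat \<sigma> s n k i x'"
      using not_less_Least[of i ?below] unfolding j'_def by auto
    have "Zstat \<sigma> s n k i x' \<le> Zstat \<sigma> s n k i x" using le i \<open>j' \<le> j\<close> by auto
    also have "\<dots> \<le> u k i" using drop i \<open>j' \<le> j\<close> unfolding drops_at_def by auto
    finally show "Zstat \<sigma> s n k i x' \<le> u k i" .
  qed (use \<open>?below j'\<close> in simp)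
  then show ?thesis using \<open>?below j'\<close> \<open>j' \<le> j\<close> by auto
qed

lemma crosses_upper_not_drops_at:
  assumes cross: "crosses_upper \<sigma> s n l u k j x" and "l k j \<le> u k j" and "1 \<le> j" "1 \<le> j'"
  shows "\<not> drops_at \<sigma> s n l u k j' x"
proof
  assume drop: "drops_at \<sigma> s n l u k j' x"
  consider "j' < j" | "j' = j" | "j < j'" by linarith
  then show False
    by cases (use cross drop \<open>l k j \<le> u k j\<close> \<open>1 \<le> j\<close> \<open>1 \<le> j'\<close> in
        \<open>force simp: crosses_upper_def drops_at_def\<close>)+
qed

definition all_dropped :: "real \<Rightarrow> (nat \<Rightarrow> nat) \<Rightarrow> (nat \<Rightarrow> nat \<Rightarrow> nat) \<Rightarrow> (nat \<Rightarrow> nat \<Rightarrow> real)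
    \<Rightarrow> (nat \<Rightarrow> nat \<Rightarrow> real) \<Rightarrow> (nat \<Rightarrow> nat) \<Rightarrow> nat set \<Rightarrow> (nat \<times> nat \<Rightarrow> real) \<Rightarrow> bool" where
  "all_dropped \<sigma> s n l u J A x \<longleftrightarrow> (\<forall>k\<in>A. \<exists>j\<in>{1..J k}. drops_at \<sigma> s n l u k j x)"

lemma all_dropped_mono:
  "B \<subseteq> A \<Longrightarrow> {x \<in> X. all_dropped \<sigma> s n l u J A x} \<subseteq> {x \<in> X. all_dropped \<sigma> s n l u J B x}"
  unfolding all_dropped_def by blast

lemma sets_all_dropped:
  "finite A \<Longrightarrow> {x \<in> space (trial_space K J n \<sigma> \<mu>). all_dropped \<sigma>' s n' l u J' A x}
     \<in> sets (trial_space K J n \<sigma> \<mu>)"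
  unfolding all_dropped_def drops_at_def by measurable

lemma rejections_not_all_dropped:
  assumes "\<forall>k\<in>{1..K}. \<forall>j\<in>{1..J k}. l k j \<le> u k j"
  shows "{x \<in> X. \<exists>k\<in>{1..K}. \<mu> k \<le> \<mu> 0 \<and> rejects K J s \<sigma> n l u k x}
     \<subseteq> X - {x \<in> X. all_dropped \<sigma> s n l u J {k \<in> {1..K}. \<mu> k \<le> \<mu> 0} x}"
proof
  fix x assume "x \<in> {x \<in> X. \<exists>k\<in>{1..K}. \<mu> k \<le> \<mu> 0 \<and> rejects K J s \<sigma> n l u k x}"
  then obtain k j where x: "x \<in> X" and k: "k \<in> {1..K}" "\<mu> k \<le> \<mu> 0"
    and j: "j \<in> {1..J k}" and cross: "crosses_upper \<sigma> s n l u k j x"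
    unfolding rejects_def by blast
  have "\<not> drops_at \<sigma> s n l u k j' x" if "j' \<in> {1..J k}" for j'
    using crosses_upper_not_drops_at[OF cross] assms k j that by auto
  with x k show "x \<in> X - {x \<in> X. all_dropped \<sigma> s n l u J {k \<in> {1..K}. \<mu> k \<le> \<mu> 0} x}"
    unfolding all_dropped_def by auto
qed

locale concurrent_control_design =
  fixes K :: nat and J :: "nat \<Rightarrow> nat" and s :: "nat \<Rightarrow> nat" and n :: "nat \<Rightarrow> nat \<Rightarrow> nat"
    and \<sigma> :: real
  assumes sigma_pos: "\<sigma> > 0"
    and n0_incr: "\<forall>j<J 0. n 0 j < n 0 (Suc j)"
    and arm_within_control: "\<forall>k\<in>{1..K}. s k + J k \<le> J 0"
    and nk_pos: "\<forall>k\<in>{1..K}. 0 < n k 1"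
    and nk_mono: "\<forall>k\<in>{1..K}. \<forall>j\<in>{1..<J k}. n k j \<le> n k (Suc j)"
begin

lemma n0_mono:
  assumes "a \<le> b" and "b \<le> J 0"
  shows "n 0 a \<le> n 0 b"
proof (rule bounded_lift_Suc_mono_le[OF _ \<open>a \<le> b\<close>])
  fix i assume "i < b"
  then show "n 0 i \<le> n 0 (Suc i)"
    using n0_incr \<open>b \<le> J 0\<close> by (simp add: less_imp_le)
qed

lemma nk_mono_le:
  assumes "k \<in> {1..K}" and "1 \<le> a" and "a \<le> b" and "b \<le> J k"
  shows "n k a \<le> n k b"
proof (rule bounded_lift_Suc_mono_le[OF _ \<open>a \<le> b\<close>])
  fix i assume "a \<le> i" and "i < b"
  then show "n k i \<le> n k (Suc i)"
    using nk_mono assms by simp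
qed

lemma Zstat_mean_shift_le_true_null:
  assumes "k \<in> {1..K}" "j \<in> {1..J k}" "\<mu> k \<le> \<mu> 0"
  shows "Zstat \<sigma> s n k j (mean_shift K J n \<mu> (\<mu> 0) y) \<le> Zstat \<sigma> s n k j y"
proof (rule Zstat_mean_shift_le)
  have "s k + j \<le> J 0"
    using arm_within_control assms(1,2) by fastforce
  then show "n 0 (s k) \<le> n 0 (s k + j)" and "n 0 (s k + j) \<le> n 0 (J 0)"
    by (simp_all add: n0_mono)
  have "n k 1 \<le> n k j" and "n k j \<le> n k (J k)"
    using assms(1,2) by (simp_all add: nk_mono_le)
  moreover have "0 < n k 1"
    using nk_pos assms(1) by blast
  ultimately show "0 < n k j" and "n k j \<le> n k (J k)"
    by simp_all
qed (use assms sigma_pos in auto)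

lemma all_dropped_mean_shift:
  assumes "all_dropped \<sigma> s n l u J A y" and "\<forall>k\<in>A. k \<in> {1..K} \<and> \<mu> k \<le> \<mu> 0"
  shows "all_dropped \<sigma> s n l u J A (mean_shift K J n \<mu> (\<mu> 0) y)"
  unfolding all_dropped_def
proof
  fix k assume "k \<in> A"
  then have k: "k \<in> {1..K}" "\<mu> k \<le> \<mu> 0"
    using assms(2) by auto
  obtain j where j: "j \<in> {1..J k}" and drop: "drops_at \<sigma> s n l u k j y"
    using assms(1) \<open>k \<in> A\<close> unfolding all_dropped_def by blast
  have "\<forall>i\<in>{1..j}. Zstat \<sigma> s n k i (mean_shift K J n \<mu> (\<mu> 0) y) \<le> Zstat \<sigma> s n k i y"
    using j k by (auto intro: Zstat_mean_shift_le_true_null)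
  from drops_at_if_Zstat_le[OF this drop] j
  obtain j' where "j' \<in> {1..j}" and "drops_at \<sigma> s n l u k j' (mean_shift K J n \<mu> (\<mu> 0) y)"
    by auto
  with j show "\<exists>j\<in>{1..J k}. drops_at \<sigma> s n l u k j (mean_shift K J n \<mu> (\<mu> 0) y)"
    by auto
qed

lemma prob_all_dropped_global_null_le:
  assumes "finite A" and true_null: "\<forall>k\<in>A. k \<in> {1..K} \<and> \<mu> k \<le> \<mu> 0"
  shows "measure (trial_space K J n \<sigma> (\<lambda>_. \<mu> 0))
           {x \<in> space (trial_space K J n \<sigma> (\<lambda>_. \<mu> 0)). all_dropped \<sigma> s n l u J A x}
       \<le> measure (trial_space K J n \<sigma> \<mu>)
           {x \<in> space (trial_space K J n \<sigma> \<mu>). all_dropped \<sigma> s n l u J A x}"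
proof -
  let ?P = "trial_space K J n \<sigma> \<mu>" and ?Q = "trial_space K J n \<sigma> (\<lambda>_. \<mu> 0)"
    and ?T = "mean_shift K J n \<mu> (\<mu> 0)"
  define E where "E = {x \<in> space ?P. all_dropped \<sigma> s n l u J A x}"
  have space_PQ: "space ?Q = space ?P"
    by (rule space_trial_space)
  interpret Q: prob_space ?Q
    by (rule prob_space_trial_space[OF sigma_pos])
  have "E \<subseteq> ?T -` E \<inter> space ?Q"
  proof
    fix x assume "x \<in> E"
    then have x: "x \<in> space ?Q" "all_dropped \<sigma> s n l u J A x"
      unfolding E_def space_PQ by auto
    have "?T x \<in> space ?P"
      using measurable_space[OF mean_shift_measurable x(1)] .
    with all_dropped_mean_shift[OF x(2) true_null] x(1) show "x \<in> ?T -` E \<inter> space ?Q"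
      unfolding E_def by simp
  qed
  then have "measure ?Q E \<le> measure (distr ?Q ?P ?T) E"
    using sets_all_dropped[OF \<open>finite A\<close>] unfolding E_def
    by (intro measure_le_distr_of_subset_preimage[OF Q.finite_measure_axioms mean_shift_measurable])
  then show ?thesis
    unfolding distr_trial_space_mean_shift[OF sigma_pos] E_def space_PQ .
qed

end

theorem corollary1:
  fixes K :: nat and J :: "nat \<Rightarrow> nat" and s :: "nat \<Rightarrow> nat"
    and n :: "nat \<Rightarrow> nat \<Rightarrow> nat" and l u :: "nat \<Rightarrow> nat \<Rightarrow> real"
    and \<sigma> \<alpha> :: real
  assumes sigma_pos: "\<sigma> > 0"
    and n00: "n 0 0 = 0"
    and n0_incr: "\<forall>j<J 0. n 0 j < n 0 (Suc j)"
    and arm_stages: "\<forall>k\<in>{1..K}. 1 \<le> J k \<and> s k + J k \<le> J 0"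
    and nk_pos: "\<forall>k\<in>{1..K}. 0 < n k 1"
    and nk_mono: "\<forall>k\<in>{1..K}. \<forall>j\<in>{1..<J k}. n k j \<le> n k (Suc j)"
    and l_le_u: "\<forall>k\<in>{1..K}. \<forall>j\<in>{1..J k}. l k j \<le> u k j"
    and l_eq_u_final: "\<forall>k\<in>{1..K}. l k (J k) = u k (J k)"
    and global_null: "\<forall>c::real.
       measure (trial_space K J n \<sigma> (\<lambda>_. c))
         {x \<in> space (trial_space K J n \<sigma> (\<lambda>_. c)).
            \<forall>k\<in>{1..K}. \<exists>j\<in>{1..J k}. drops_at \<sigma> s n l u k j x} = 1 - \<alpha>"
  shows "\<forall>\<mu> :: nat \<Rightarrow> real.
       measure (trial_space K J n \<sigma> \<mu>)
         {x \<in> space (trial_space K J n \<sigma> \<mu>).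
            \<exists>k\<in>{1..K}. \<mu> k \<le> \<mu> 0 \<and> rejects K J s \<sigma> n l u k x} \<le> \<alpha>"
proof
  fix \<mu> :: "nat \<Rightarrow> real"
  interpret concurrent_control_design K J s n \<sigma>
    using sigma_pos n0_incr arm_stages nk_pos nk_mono by unfold_locales auto
  define A where "A = {k \<in> {1..K}. \<mu> k \<le> \<mu> 0}"
  let ?P = "trial_space K J n \<sigma> \<mu>" and ?Q = "trial_space K J n \<sigma> (\<lambda>_. \<mu> 0)"
  let ?dropped = "\<lambda>M B. {x \<in> space M. all_dropped \<sigma> s n l u J B x}"
  have "finite A" and true_null: "\<forall>k\<in>A. k \<in> {1..K} \<and> \<mu> k \<le> \<mu> 0"
    by (simp_all add: A_def)
  interpret P: prob_space ?P
    by (rule prob_space_trial_space[OF sigma_pos])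
  interpret Q: prob_space ?Q
    by (rule prob_space_trial_space[OF sigma_pos])
  let ?rejected = "{x \<in> space ?P. \<exists>k\<in>{1..K}. \<mu> k \<le> \<mu> 0 \<and> rejects K J s \<sigma> n l u k x}"
  have "?rejected \<subseteq> space ?P - ?dropped ?P A"
    unfolding A_def by (rule rejections_not_all_dropped[OF l_le_u])
  then have "measure ?P ?rejected \<le> measure ?P (space ?P - ?dropped ?P A)"
    by (intro P.finite_measure_mono sets.compl_sets sets_all_dropped \<open>finite A\<close>)
  also have "\<dots> = 1 - measure ?P (?dropped ?P A)"
    by (intro P.prob_compl sets_all_dropped \<open>finite A\<close>)
  also have "\<dots> \<le> 1 - measure ?Q (?dropped ?Q A)"
    using prob_all_dropped_global_null_le[OF \<open>finite A\<close> true_null, of l u] by linarith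
  also have "\<dots> \<le> 1 - measure ?Q (?dropped ?Q {1..K})"
  proof -
    have "measure ?Q (?dropped ?Q {1..K}) \<le> measure ?Q (?dropped ?Q A)"
      by (intro Q.finite_measure_mono all_dropped_mono sets_all_dropped \<open>finite A\<close>) (auto simp: A_def)
    then show ?thesis
      by linarith
  qed
  also have "\<dots> = \<alpha>"
    using global_null[rule_format, of "\<mu> 0"] unfolding all_dropped_def by linarith
  finally show "measure ?P ?rejected \<le> \<alpha>" .
qed

end
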